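(* Let $B$ be any group and $p\ge 2$ an integer. Suppose $w\in (B\wr C_p)'$ is given by the wreath recursion $$w=(r_1,r_2,\dots,r_{p-1},\; r_1^{-1}\cdots r_{p-1}^{-1}[f,g])$$ with $r_1,\dots,r_{p-1},f,g\in B$. Define elements of $B$ by $a_{1,i}=e$ for $1\le i\le p-1$; $a_{2,1}=(f^{-1})^{r_1^{-1}\cdots r_{p-1}^{-1}}$; $a_{2,i}=r_{i-1}a_{2,i-1}$ for $2\le i\le p$; $a_{1,p}=g^{a_{2,p}^{-1}}$. Then $$w=[(a_{1,1},\dots,a_{1,p})\sigma,\ (a_{2,1},\dots,a_{2,p})].$$
   Context: $C_p=\langle\sigma\rangle$ with $\sigma=(1,2,\dots,p)$ acting on $\{1,\dots,p\}$. Elements of $B\wr C_p=B^p\rtimes C_p$ are written $(b_1,\dots,b_p)\tau$, with multiplication $(g_1,\dots,g_p)\tau\cdot(h_1,\dots,h_p)\rho=(g_1h_{\tau(1)},\dots,g_ph_{\tau(p)})\tau\rho$; $(b_1,\dots,b_p)$ denotes an element with trivial $C_p$-part. Conventions: $[a,b]=aba^{-1}b^{-1}$ and $a^b=bab^{-1}$. *)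

theory Defs
  imports "HOL-Algebra.Algebra"
begin

text \<open>sigma^k acting on {1..p}, with sigma = (1,2,...,p), i.e. sigma i = i+1 mod p.\<close>
definition cyc :: "nat \<Rightarrow> nat \<Rightarrow> nat \<Rightarrow> nat" where
  "cyc p k i = (i - 1 + k) mod p + 1"

text \<open>Wreath product B wr C_p: elements (b,k) stand for (b_1,...,b_p) sigma^k;
  coordinates outside {1..p} are normalised to the identity.\<close>
definition wmult :: "('a,'m) monoid_scheme \<Rightarrow> nat \<Rightarrow> (nat \<Rightarrow> 'a) \<times> nat \<Rightarrow> (nat \<Rightarrow> 'a) \<times> nat \<Rightarrow> (nat \<Rightarrow> 'a) \<times> nat" where
  "wmult B p x y = ((\<lambda>i. if i \<in> {1..p} then fst x i \<otimes>\<^bsub>B\<^esub> fst y (cyc p (snd x) i) else \<one>\<^bsub>B\<^esub>),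
                    (snd x + snd y) mod p)"

definition wreath :: "('a,'m) monoid_scheme \<Rightarrow> nat \<Rightarrow> ((nat \<Rightarrow> 'a) \<times> nat) monoid" where
  "wreath B p = \<lparr> carrier = {x. (\<forall>i\<in>{1..p}. fst x i \<in> carrier B) \<and>
                                    (\<forall>i. i \<notin> {1..p} \<longrightarrow> fst x i = \<one>\<^bsub>B\<^esub>) \<and> snd x < p},
                 monoid.mult = wmult B p,
                 monoid.one = ((\<lambda>i. \<one>\<^bsub>B\<^esub>), 0) \<rparr>"

definition wel :: "('a,'m) monoid_scheme \<Rightarrow> nat \<Rightarrow> (nat \<Rightarrow> 'a) \<Rightarrow> nat \<Rightarrow> (nat \<Rightarrow> 'a) \<times> nat" where
  "wel B p b k = ((\<lambda>i. if i \<in> {1..p} then b i else \<one>\<^bsub>B\<^esub>), k mod p)"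

definition gcomm :: "('a,'m) monoid_scheme \<Rightarrow> 'a \<Rightarrow> 'a \<Rightarrow> 'a" where
  "gcomm G a b = a \<otimes>\<^bsub>G\<^esub> b \<otimes>\<^bsub>G\<^esub> inv\<^bsub>G\<^esub> a \<otimes>\<^bsub>G\<^esub> inv\<^bsub>G\<^esub> b"

definition gconj :: "('a,'m) monoid_scheme \<Rightarrow> 'a \<Rightarrow> 'a \<Rightarrow> 'a" where
  "gconj G a b = b \<otimes>\<^bsub>G\<^esub> a \<otimes>\<^bsub>G\<^esub> inv\<^bsub>G\<^esub> b"

definition lprod :: "('a,'m) monoid_scheme \<Rightarrow> 'a list \<Rightarrow> 'a" where
  "lprod G xs = foldr (\<lambda>x acc. x \<otimes>\<^bsub>G\<^esub> acc) xs \<one>\<^bsub>G\<^esub>"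

end

theory Submission
  imports Defs
begin

text \<open>In B wr C_p the commutator of (a_1,...,a_p)\<sigma> with a base element (b_1,...,b_p) is the base
  element with coordinates a_i b_{\<sigma>(i)} a_i^-1 b_i^-1. As a_{1,i} = e for i < p, the first p - 1
  coordinates are a_{2,i+1} a_{2,i}^-1 = r_i by the recursion defining a_2. Unwinding that
  recursion gives a_{2,p} = f^-1 R^-1 with R = r_1^-1 ... r_{p-1}^-1, and since a_{1,p} conjugates
  g by a_{2,p}^-1, the last coordinate collapses to R [f, g].\<close>

lemma cyc_in_range: "0 < p \<Longrightarrow> cyc p k i \<in> {1..p}"
  unfolding cyc_def by (auto simp: Suc_le_eq)

lemma cyc_0: "i \<in> {1..p} \<Longrightarrow> cyc p 0 i = i"
  unfolding cyc_def by auto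

lemma cyc_cyc: "cyc p l (cyc p k i) = cyc p (k + l) i"
  unfolding cyc_def by (simp add: mod_add_left_eq add.assoc)

lemma cyc_mod: "cyc p (k mod p) i = cyc p k i"
  unfolding cyc_def by (simp add: mod_add_right_eq)

lemma cyc_1: "1 \<le> i \<Longrightarrow> i < p \<Longrightarrow> cyc p 1 i = Suc i"
  unfolding cyc_def by simp

lemma cyc_1_last: "0 < p \<Longrightarrow> cyc p 1 p = 1"
  unfolding cyc_def by simp

lemma wreath_group:
  assumes "group B" and p: "0 < p"
  shows "group (wreath B p)"
proof -
  interpret group B by fact
  note range = cyc_in_range[OF p]
  show ?thesis
  proof (rule groupI)
    fix x y assume "x \<in> carrier (wreath B p)" "y \<in> carrier (wreath B p)"
    then show "x \<otimes>\<^bsub>wreath B p\<^esub> y \<in> carrier (wreath B p)"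
      using range p by (auto simp: wreath_def wmult_def)
  next
    show "\<one>\<^bsub>wreath B p\<^esub> \<in> carrier (wreath B p)"
      using p by (simp add: wreath_def)
  next
    fix x y z assume "x \<in> carrier (wreath B p)" "y \<in> carrier (wreath B p)" "z \<in> carrier (wreath B p)"
    then show "x \<otimes>\<^bsub>wreath B p\<^esub> y \<otimes>\<^bsub>wreath B p\<^esub> z = x \<otimes>\<^bsub>wreath B p\<^esub> (y \<otimes>\<^bsub>wreath B p\<^esub> z)"
      using range
      by (auto simp: wreath_def wmult_def fun_eq_iff m_assoc cyc_mod cyc_cyc mod_add_left_eq mod_add_right_eq add.assoc)
  next
    fix x assume "x \<in> carrier (wreath B p)"
    then show "\<one>\<^bsub>wreath B p\<^esub> \<otimes>\<^bsub>wreath B p\<^esub> x = x"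
      by (auto simp: wreath_def wmult_def prod_eq_iff fun_eq_iff cyc_0)
  next
    fix x assume x: "x \<in> carrier (wreath B p)"
    define l where "l = (p - snd x) mod p"
    let ?y = "(\<lambda>i. if i \<in> {1..p} then inv\<^bsub>B\<^esub> fst x (cyc p l i) else \<one>\<^bsub>B\<^esub>, l)"
    have "(l + snd x) mod p = 0"
      using x by (simp add: l_def mod_add_left_eq wreath_def)
    then have "?y \<in> carrier (wreath B p)" "?y \<otimes>\<^bsub>wreath B p\<^esub> x = \<one>\<^bsub>wreath B p\<^esub>"
      using x range p by (auto simp: wreath_def wmult_def l_def fun_eq_iff)
    then show "\<exists>y\<in>carrier (wreath B p). y \<otimes>\<^bsub>wreath B p\<^esub> x = \<one>\<^bsub>wreath B p\<^esub>" by blast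
  qed
qed

lemma wel_cong: "(\<And>i. i \<in> {1..p} \<Longrightarrow> b i = c i) \<Longrightarrow> wel B p b k = wel B p c k"
  unfolding wel_def by auto

lemma (in group) inv_mult_cancel_left: "x \<in> carrier G \<Longrightarrow> y \<in> carrier G \<Longrightarrow> inv x \<otimes> (x \<otimes> y) = y"
  by (simp add: m_assoc[symmetric])

lemma (in group) mult_inv_cancel_left: "x \<in> carrier G \<Longrightarrow> y \<in> carrier G \<Longrightarrow> x \<otimes> (inv x \<otimes> y) = y"
  by (simp add: m_assoc[symmetric])

lemma (in group) gcomm_eq_iff:
  assumes "x \<in> carrier G" "y \<in> carrier G" "z \<in> carrier G"
  shows "gcomm G x y = z \<longleftrightarrow> x \<otimes> y = z \<otimes> y \<otimes> x"
  using assms by (simp add: gcomm_def inv_solve_right')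

lemma (in group) gcomm_wel_base:
  assumes p: "0 < p"
    and a: "\<forall>i\<in>{1..p}. a i \<in> carrier G" and b: "\<forall>i\<in>{1..p}. b i \<in> carrier G"
  shows "gcomm (wreath G p) (wel G p a k) (wel G p b 0)
       = wel G p (\<lambda>i. a i \<otimes> b (cyc p k i) \<otimes> inv a i \<otimes> inv b i) 0"
proof -
  note range = cyc_in_range[OF p]
  \<comment> \<open>\<open>[x, y] = z\<close> is checked as \<open>x y = z y x\<close>, so no inverse in the wreath product is computed.\<close>
  have "wel G p a k \<otimes>\<^bsub>wreath G p\<^esub> wel G p b 0
      = wel G p (\<lambda>i. a i \<otimes> b (cyc p k i) \<otimes> inv a i \<otimes> inv b i) 0
          \<otimes>\<^bsub>wreath G p\<^esub> wel G p b 0 \<otimes>\<^bsub>wreath G p\<^esub> wel G p a k"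
    using a b range
    by (auto simp: wel_def wreath_def wmult_def fun_eq_iff cyc_mod cyc_0 m_assoc inv_mult_cancel_left)
  moreover have "wel G p c k \<in> carrier (wreath G p)" if "\<forall>i\<in>{1..p}. c i \<in> carrier G" for c k
    using that p by (simp add: wel_def wreath_def)
  ultimately show ?thesis
    using a b range by (simp add: group.gcomm_eq_iff[OF wreath_group[OF is_group p]])
qed

lemma (in group) gcomm_wel_cycle_base:
  assumes p: "0 < p" and a: "\<forall>i\<in>{1..p-1}. a i = \<one>" "a p \<in> carrier G"
    and b: "\<forall>i\<in>{1..p}. b i \<in> carrier G"
  shows "gcomm (wreath G p) (wel G p a 1) (wel G p b 0)
       = wel G p (\<lambda>i. if i < p then b (Suc i) \<otimes> inv b i else a p \<otimes> b 1 \<otimes> inv a p \<otimes> inv b p) 0"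
proof -
  have a_closed: "\<forall>i\<in>{1..p}. a i \<in> carrier G"
  proof
    fix i assume "i \<in> {1..p}"
    then show "a i \<in> carrier G"
      using a by (cases "i = p") auto
  qed
  show ?thesis
    unfolding gcomm_wel_base[OF p a_closed b]
  proof (rule wel_cong)
    fix i assume i: "i \<in> {1..p}"
    show "a i \<otimes> b (cyc p 1 i) \<otimes> inv a i \<otimes> inv b i
        = (if i < p then b (Suc i) \<otimes> inv b i else a p \<otimes> b 1 \<otimes> inv a p \<otimes> inv b p)"
    proof (cases "i < p")
      case True
      then show ?thesis
        using i a b cyc_1[of i p] by simp
    next
      case False
      then show ?thesis
        using i cyc_1_last[OF p] by simp
    qed
  qed
qed

lemma (in monoid) lprod_closed: "set xs \<subseteq> carrier G \<Longrightarrow> lprod G xs \<in> carrier G"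
  by (induction xs) (auto simp: lprod_def)

lemma (in monoid) lprod_snoc:
  "set xs \<subseteq> carrier G \<Longrightarrow> x \<in> carrier G \<Longrightarrow> lprod G (xs @ [x]) = lprod G xs \<otimes> x"
  by (induction xs) (auto simp: lprod_def m_assoc lprod_closed[unfolded lprod_def])

lemma (in group) lprod_inv_recursion:
  assumes "1 \<le> n" and "a 1 \<in> carrier G"
    and "\<And>i. i \<in> {1..<n} \<Longrightarrow> r i \<in> carrier G"
    and "\<And>i. i \<in> {1..<n} \<Longrightarrow> a (Suc i) = r i \<otimes> a i"
  shows "a n \<in> carrier G \<and> lprod G (map (\<lambda>j. inv r j) [1..<n]) \<otimes> a n = a 1"
  using assms
proof (induction n)
  case 0
  then show ?case by simp
next
  case (Suc n)
  show ?case
  proof (cases "n = 0")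
    case True
    then show ?thesis using Suc.prems by (simp add: lprod_def)
  next
    case False
    then have IH: "a n \<in> carrier G" "lprod G (map (\<lambda>j. inv r j) [1..<n]) \<otimes> a n = a 1"
      using Suc by auto
    have r: "r n \<in> carrier G" and rec: "a (Suc n) = r n \<otimes> a n"
      using Suc.prems False by auto
    have L: "lprod G (map (\<lambda>j. inv r j) [1..<n]) \<in> carrier G"
      using Suc.prems(3) by (intro lprod_closed) auto
    have "lprod G (map (\<lambda>j. inv r j) [1..<Suc n]) = lprod G (map (\<lambda>j. inv r j) [1..<n]) \<otimes> inv r n"
      using False Suc.prems(3) by (simp, intro lprod_snoc) auto
    then show ?thesis
      unfolding rec using IH L r by (simp add: m_assoc inv_mult_cancel_left)
  qed
qed

lemma (in group) gconj_commutator_identity: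
  assumes "R \<in> carrier G" "f \<in> carrier G" "g \<in> carrier G" "y \<in> carrier G"
    and "R \<otimes> y = gconj G (inv f) R"
  shows "gconj G g (inv y) \<otimes> gconj G (inv f) R \<otimes> inv (gconj G g (inv y)) \<otimes> inv y
       = R \<otimes> gcomm G f g"
proof -
  have "y = inv f \<otimes> inv R"
    using assms by (simp add: gconj_def inv_solve_left m_assoc)
  then show ?thesis
    using assms by (simp add: gconj_def gcomm_def m_assoc inv_mult_group inv_mult_cancel_left mult_inv_cancel_left)
qed

theorem mainTheorem3:
  fixes B :: "('a,'m) monoid_scheme" and p :: nat
    and r :: "nat \<Rightarrow> 'a" and f g :: 'a
    and w :: "(nat \<Rightarrow> 'a) \<times> nat"
    and a1 a2 :: "nat \<Rightarrow> 'a"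
  assumes "group B" and "p \<ge> 2"
    and r: "\<forall>i\<in>{1..p-1}. r i \<in> carrier B"
    and "f \<in> carrier B" and "g \<in> carrier B"
    and w: "w = wel B p (\<lambda>i. if i < p then r i
               else lprod B (map (\<lambda>j. inv\<^bsub>B\<^esub> r j) [1..<p]) \<otimes>\<^bsub>B\<^esub> gcomm B f g) 0"
    and a11: "\<forall>i\<in>{1..p-1}. a1 i = \<one>\<^bsub>B\<^esub>"
    and a21: "a2 1 = gconj B (inv\<^bsub>B\<^esub> f) (lprod B (map (\<lambda>j. inv\<^bsub>B\<^esub> r j) [1..<p]))"
    and a2i: "\<forall>i\<in>{2..p}. a2 i = r (i - 1) \<otimes>\<^bsub>B\<^esub> a2 (i - 1)"
    and a1p: "a1 p = gconj B g (inv\<^bsub>B\<^esub> (a2 p))"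
  shows "w = gcomm (wreath B p) (wel B p a1 1) (wel B p a2 0)"
proof -
  interpret group B by fact
  have p: "0 < p" using \<open>2 \<le> p\<close> by simp
  define R where "R = lprod B (map (\<lambda>j. inv\<^bsub>B\<^esub> r j) [1..<p])"
  have R: "R \<in> carrier B"
    unfolding R_def using r by (intro lprod_closed) auto
  have "a2 1 \<in> carrier B"
    using a21 R \<open>f \<in> carrier B\<close> by (simp add: R_def gconj_def)
  then have a2: "a2 i \<in> carrier B \<and> lprod B (map (\<lambda>j. inv\<^bsub>B\<^esub> r j) [1..<i]) \<otimes>\<^bsub>B\<^esub> a2 i = a2 1"
    if "i \<in> {1..p}" for i
    using that r a2i by (intro lprod_inv_recursion) auto
  have "a1 p \<in> carrier B"
    using a1p a2[of p] p \<open>g \<in> carrier B\<close> by (simp add: gconj_def)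
  have inner: "a2 (Suc i) \<otimes>\<^bsub>B\<^esub> inv\<^bsub>B\<^esub> a2 i = r i" if "i \<in> {1..<p}" for i
    using that r a2i a2[of i] by (auto simp: m_assoc)
  have last: "a1 p \<otimes>\<^bsub>B\<^esub> a2 1 \<otimes>\<^bsub>B\<^esub> inv\<^bsub>B\<^esub> a1 p \<otimes>\<^bsub>B\<^esub> inv\<^bsub>B\<^esub> a2 p = R \<otimes>\<^bsub>B\<^esub> gcomm B f g"
    unfolding a1p a21 R_def[symmetric]
    using a2[of p] p a21 R \<open>f \<in> carrier B\<close> \<open>g \<in> carrier B\<close>
    by (intro gconj_commutator_identity) (auto simp: R_def)
  have "gcomm (wreath B p) (wel B p a1 1) (wel B p a2 0)
      = wel B p (\<lambda>i. if i < p then a2 (Suc i) \<otimes>\<^bsub>B\<^esub> inv\<^bsub>B\<^esub> a2 i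
                      else a1 p \<otimes>\<^bsub>B\<^esub> a2 1 \<otimes>\<^bsub>B\<^esub> inv\<^bsub>B\<^esub> a1 p \<otimes>\<^bsub>B\<^esub> inv\<^bsub>B\<^esub> a2 p) 0"
    using p a11 a2 \<open>a1 p \<in> carrier B\<close> by (intro gcomm_wel_cycle_base) auto
  also have "\<dots> = w"
    unfolding w R_def[symmetric] using inner last by (intro wel_cong) auto
  finally show ?thesis ..
qed

end
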